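(* Let $R$ be a Dedekind domain with fraction field $K$ and let $C$ be a nonzero ideal of $R$. Let $E$ be the set of fractional ideals of $R$ in $K$ containing $R$, and define subsets $A_0\subseteq A_1\subseteq\cdots$ of $E$ by $A_0=\{R\}$ and, for $i>0$, $$A_i=A_{i-1}\cup\{I\in E:\ \forall x\in IC\setminus C\ \exists y\in C \text{ such that } (x-y)^{-1}IC\in A_{i-1}\}.$$ If $i\ge 1$ and $I\in A_i\setminus A_{i-1}$, then the ideal class of $I$ equals the ideal class of $C^{-i}$ in the class group of $R$.
   Context: $[J]$ denotes the class of a fractional ideal $J$ in the ideal class group of $R$. *)

theory Defs
  imports "HOL-Computational_Algebra.Polynomial"
begin

text \<open>The ambient field K is the type 'k; R is a subring of K whose fraction field is K.\<close>

definition subring_of :: "'k::field set \<Rightarrow> bool" where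
  "subring_of R \<longleftrightarrow> 0 \<in> R \<and> 1 \<in> R \<and>
     (\<forall>a\<in>R. \<forall>b\<in>R. a + b \<in> R \<and> a - b \<in> R \<and> a * b \<in> R)"

definition is_ideal :: "'k::field set \<Rightarrow> 'k set \<Rightarrow> bool" where
  "is_ideal R C \<longleftrightarrow> C \<subseteq> R \<and> 0 \<in> C \<and>
     (\<forall>a\<in>C. \<forall>b\<in>C. a + b \<in> C \<and> a - b \<in> C) \<and> (\<forall>r\<in>R. \<forall>c\<in>C. r * c \<in> C)"

definition is_prime_ideal :: "'k::field set \<Rightarrow> 'k set \<Rightarrow> bool" where
  "is_prime_ideal R P \<longleftrightarrow> is_ideal R P \<and> P \<noteq> R \<and>
     (\<forall>a\<in>R. \<forall>b\<in>R. a * b \<in> P \<longrightarrow> a \<in> P \<or> b \<in> P)"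

definition is_maximal_ideal :: "'k::field set \<Rightarrow> 'k set \<Rightarrow> bool" where
  "is_maximal_ideal R M \<longleftrightarrow> is_ideal R M \<and> M \<noteq> R \<and>
     (\<forall>J. is_ideal R J \<and> M \<subseteq> J \<longrightarrow> J = M \<or> J = R)"

definition noetherian :: "'k::field set \<Rightarrow> bool" where
  "noetherian R \<longleftrightarrow> (\<forall>f :: nat \<Rightarrow> 'k set. (\<forall>n. is_ideal R (f n)) \<and> (\<forall>n. f n \<subseteq> f (Suc n))
      \<longrightarrow> (\<exists>N. \<forall>n\<ge>N. f n = f N))"

definition integrally_closed :: "'k::field set \<Rightarrow> bool" where
  "integrally_closed R \<longleftrightarrow> (\<forall>x. (\<exists>p. lead_coeff p = 1 \<and> (\<forall>i. coeff p i \<in> R) \<and> poly p x = 0)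
      \<longrightarrow> x \<in> R)"

definition is_fraction_field :: "'k::field set \<Rightarrow> bool" where
  "is_fraction_field R \<longleftrightarrow> (\<forall>z. \<exists>a\<in>R. \<exists>b\<in>R. b \<noteq> 0 \<and> z = a / b)"

definition dedekind_domain :: "'k::field set \<Rightarrow> bool" where
  "dedekind_domain R \<longleftrightarrow> subring_of R \<and> is_fraction_field R \<and> noetherian R \<and>
     integrally_closed R \<and> (\<forall>P. is_prime_ideal R P \<and> P \<noteq> {0} \<longrightarrow> is_maximal_ideal R P)"

definition frac_ideal :: "'k::field set \<Rightarrow> 'k set \<Rightarrow> bool" where
  "frac_ideal R I \<longleftrightarrow> 0 \<in> I \<and> I \<noteq> {0} \<and> (\<forall>a\<in>I. \<forall>b\<in>I. a + b \<in> I) \<and>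
     (\<forall>r\<in>R. \<forall>x\<in>I. r * x \<in> I) \<and> (\<exists>d\<in>R. d \<noteq> 0 \<and> (\<lambda>x. d * x) ` I \<subseteq> R)"

definition mod_prod :: "'k::comm_ring set \<Rightarrow> 'k set \<Rightarrow> 'k set" where
  "mod_prod I J = {z. \<exists>(n::nat) f g. (\<forall>k<n. f k \<in> I \<and> g k \<in> J) \<and> z = (\<Sum>k<n. f k * g k)}"

primrec ideal_pow :: "'k::field set \<Rightarrow> 'k set \<Rightarrow> nat \<Rightarrow> 'k set" where
  "ideal_pow R C 0 = R"
| "ideal_pow R C (Suc i) = mod_prod (ideal_pow R C i) C"

definition frac_inv :: "'k::field set \<Rightarrow> 'k set \<Rightarrow> 'k set" where
  "frac_inv R J = {x. \<forall>c\<in>J. x * c \<in> R}"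

definition scale_set :: "'k::field \<Rightarrow> 'k set \<Rightarrow> 'k set" where
  "scale_set a S = (\<lambda>x. a * x) ` S"

definition ideal_class :: "'k::field set \<Rightarrow> 'k set \<Rightarrow> 'k set set" where
  "ideal_class R J = {I. frac_ideal R I \<and> (\<exists>a. a \<noteq> 0 \<and> I = scale_set a J)}"

definition E_set :: "'k::field set \<Rightarrow> 'k set set" where
  "E_set R = {I. frac_ideal R I \<and> R \<subseteq> I}"

primrec A_set :: "'k::field set \<Rightarrow> 'k set \<Rightarrow> nat \<Rightarrow> 'k set set" where
  "A_set R C 0 = {R}"
| "A_set R C (Suc i) = A_set R C i \<union>
     {I \<in> E_set R. \<forall>x \<in> mod_prod I C - C. \<exists>y\<in>C.
         scale_set (inverse (x - y)) (mod_prod I C) \<in> A_set R C i}"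

end

theory Submission
  imports Defs
begin

text \<open>
  Nonzero ideals of a Dedekind domain are invertible. Every nonzero ideal contains a product of
  nonzero primes; from a shortest such product inside a principal ideal \<open>aR \<subseteq> P\<close> one
  obtains an element of \<open>P\<inverse>\<close> outside \<open>R\<close>. As \<open>R\<close> is Noetherian and integrally
  closed, such an element cannot stabilise a nonzero ideal, so \<open>A \<subset> A P\<inverse>\<close> for every nonzero
  ideal \<open>A \<subseteq> P\<close>, and Noetherian induction yields \<open>A A\<inverse> = R\<close>.

  Hence every fractional ideal satisfies \<open>I = (I C) C\<inverse>\<close>. If \<open>I \<in> A\<^sub>i - A\<^sub>i\<^sub>-\<^sub>1\<close>, some
  \<open>x \<in> I C - C\<close> witnesses the failure at level \<open>i - 1\<close>, and the \<open>y\<close> supplied at level \<open>i\<close>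
  makes \<open>J = (x - y)\<inverse> I C\<close> an element of \<open>A\<^sub>i\<^sub>-\<^sub>1 - A\<^sub>i\<^sub>-\<^sub>2\<close> (for \<open>i = 1\<close>, \<open>J = R\<close>).
  By induction \<open>J\<close> is a multiple of \<open>C\<^sup>-\<^sup>(\<^sup>i\<^sup>-\<^sup>1\<^sup>)\<close>, so \<open>I = (x - y) J C\<inverse>\<close> is a
  multiple of \<open>C\<^sup>-\<^sup>i\<close>, and \<open>C\<^sup>-\<^sup>i\<close> is the inverse of \<open>C\<^sup>i\<close>.
\<close>

section \<open>Products of submodules\<close>

inductive_set add_closure :: "'a::comm_ring set \<Rightarrow> 'a set" for S where
  zero: "0 \<in> add_closure S"
| add: "s \<in> S \<Longrightarrow> x \<in> add_closure S \<Longrightarrow> s + x \<in> add_closure S"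

lemma add_closure_add: "x \<in> add_closure S \<Longrightarrow> y \<in> add_closure S \<Longrightarrow> x + y \<in> add_closure S"
  by (induction x rule: add_closure.induct) (auto simp: add.assoc intro: add_closure.intros)

lemma mod_prod_eq_add_closure: "mod_prod I J = add_closure {a * b | a b. a \<in> I \<and> b \<in> J}"
  (is "_ = add_closure ?P")
proof
  show "mod_prod I J \<subseteq> add_closure ?P"
  proof
    fix z assume "z \<in> mod_prod I J"
    then obtain n :: nat and f g where "\<forall>k<n. f k \<in> I \<and> g k \<in> J" and z: "z = (\<Sum>k<n. f k * g k)"
      unfolding mod_prod_def by blast
    then show "z \<in> add_closure ?P"
    proof (induction n arbitrary: z)
      case (Suc n)
      then have "(\<Sum>k<n. f k * g k) \<in> add_closure ?P" by simp
      moreover have "f n * g n \<in> ?P" using Suc.prems by blast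
      ultimately show ?case using Suc.prems by (simp add: add.commute add_closure.add)
    qed (simp add: add_closure.zero)
  qed
  show "add_closure ?P \<subseteq> mod_prod I J"
  proof
    fix z assume "z \<in> add_closure ?P"
    then show "z \<in> mod_prod I J"
    proof (induction z rule: add_closure.induct)
      case zero
      show ?case unfolding mod_prod_def by (auto intro!: exI[of _ 0])
    next
      case (add s x)
      then obtain a b where ab: "a \<in> I" "b \<in> J" "s = a * b" by blast
      from add obtain n :: nat and f g where fg: "\<forall>k<n. f k \<in> I \<and> g k \<in> J"
        and x: "x = (\<Sum>k<n. f k * g k)" unfolding mod_prod_def by blast
      have "\<forall>k<Suc n. case_nat a f k \<in> I \<and> case_nat b g k \<in> J"
        using fg ab by (auto simp: less_Suc_eq_0_disj)
      moreover have "s + x = (\<Sum>k<Suc n. case_nat a f k * case_nat b g k)"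
        unfolding sum.lessThan_Suc_shift by (simp add: ab x)
      ultimately show ?case unfolding mod_prod_def by blast
    qed
  qed
qed

lemma mult_mem_mod_prod:
  assumes "a \<in> I" "b \<in> J"
  shows "a * b \<in> mod_prod I J"
proof -
  have "a * b + 0 \<in> add_closure {a * b | a b. a \<in> I \<and> b \<in> J}"
    using assms by (blast intro: add_closure.intros)
  then show ?thesis by (simp add: mod_prod_eq_add_closure)
qed

lemma zero_mem_mod_prod: "0 \<in> mod_prod I J"
  unfolding mod_prod_eq_add_closure by (rule add_closure.zero)

lemma add_mem_mod_prod: "x \<in> mod_prod I J \<Longrightarrow> y \<in> mod_prod I J \<Longrightarrow> x + y \<in> mod_prod I J"
  unfolding mod_prod_eq_add_closure by (rule add_closure_add)

lemma mod_prod_induct [consumes 1, case_names zero step]: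
  assumes "z \<in> mod_prod I J" "P 0"
    "\<And>a b x. a \<in> I \<Longrightarrow> b \<in> J \<Longrightarrow> x \<in> mod_prod I J \<Longrightarrow> P x \<Longrightarrow> P (a * b + x)"
  shows "P z"
proof -
  have "z \<in> add_closure {a * b | a b. a \<in> I \<and> b \<in> J}"
    using assms(1) by (simp add: mod_prod_eq_add_closure)
  then show ?thesis
  proof (induction z rule: add_closure.induct)
    case (add s x)
    then obtain a b where "a \<in> I" "b \<in> J" "s = a * b" by blast
    with add show ?case by (simp add: assms(3) mod_prod_eq_add_closure)
  qed (rule assms(2))
qed

lemma mod_prod_least:
  assumes "0 \<in> M" "\<And>a b. a \<in> M \<Longrightarrow> b \<in> M \<Longrightarrow> a + b \<in> M"
    "\<And>a b. a \<in> I \<Longrightarrow> b \<in> J \<Longrightarrow> a * b \<in> M"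
  shows "mod_prod I J \<subseteq> M"
proof
  fix z assume "z \<in> mod_prod I J"
  then show "z \<in> M" by (induction rule: mod_prod_induct) (use assms in auto)
qed

lemma mod_prod_commute: "mod_prod I J = mod_prod J I"
proof -
  have "{a * b | a b. a \<in> I \<and> b \<in> J} = {a * b | a b. a \<in> J \<and> b \<in> I}"
    using mult.commute by blast
  then show ?thesis by (simp add: mod_prod_eq_add_closure)
qed

lemma mod_prod_mono: "I \<subseteq> I' \<Longrightarrow> J \<subseteq> J' \<Longrightarrow> mod_prod I J \<subseteq> mod_prod I' J'"
  by (rule mod_prod_least) (auto intro: zero_mem_mod_prod add_mem_mod_prod mult_mem_mod_prod)

lemma mod_prod_assoc_subset: "mod_prod (mod_prod I J) L \<subseteq> mod_prod I (mod_prod J L)"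
proof (rule mod_prod_least)
  fix z l assume z: "z \<in> mod_prod I J" and l: "l \<in> L"
  from z show "z * l \<in> mod_prod I (mod_prod J L)"
  proof (induction rule: mod_prod_induct)
    case (step a b x)
    have "(a * b + x) * l = a * (b * l) + x * l" by (simp add: algebra_simps)
    then show ?case using step l by (auto intro!: add_mem_mod_prod mult_mem_mod_prod)
  qed (simp add: zero_mem_mod_prod)
qed (auto intro: zero_mem_mod_prod add_mem_mod_prod)

lemma mod_prod_assoc: "mod_prod (mod_prod I J) L = mod_prod I (mod_prod J L)"
proof
  have "mod_prod I (mod_prod J L) = mod_prod (mod_prod L J) I" by (simp add: mod_prod_commute)
  also have "\<dots> \<subseteq> mod_prod L (mod_prod J I)" by (rule mod_prod_assoc_subset)
  also have "\<dots> = mod_prod (mod_prod I J) L" by (simp add: mod_prod_commute)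
  finally show "mod_prod I (mod_prod J L) \<subseteq> mod_prod (mod_prod I J) L" .
qed (rule mod_prod_assoc_subset)

lemma mod_prod_left_commute: "mod_prod I (mod_prod J L) = mod_prod J (mod_prod I L)"
  by (simp only: mod_prod_assoc[symmetric] mod_prod_commute[of I J])

lemma scale_set_scale_set: "scale_set a (scale_set b S) = scale_set (a * b) S"
  unfolding scale_set_def by (auto simp: image_image mult.assoc)

lemma scale_set_one [simp]: "scale_set 1 S = S"
  by (simp add: scale_set_def)

lemma scale_set_inverse_eq_iff:
  assumes "c \<noteq> 0"
  shows "scale_set (inverse c) S = T \<longleftrightarrow> S = scale_set c T"
proof -
  have "scale_set c (scale_set (inverse c) S) = S" "scale_set (inverse c) (scale_set c T) = T"
    using assms by (simp_all add: scale_set_scale_set)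
  then show ?thesis by metis
qed

lemma mod_prod_scale_set: "mod_prod (scale_set c I) J = scale_set c (mod_prod I J)"
proof
  show "mod_prod (scale_set c I) J \<subseteq> scale_set c (mod_prod I J)"
  proof (rule mod_prod_least)
    show "0 \<in> scale_set c (mod_prod I J)"
      unfolding scale_set_def by (metis image_eqI mult_zero_right zero_mem_mod_prod)
    show "u + v \<in> scale_set c (mod_prod I J)"
      if "u \<in> scale_set c (mod_prod I J)" "v \<in> scale_set c (mod_prod I J)" for u v
      using that unfolding scale_set_def by (auto simp flip: distrib_left intro: add_mem_mod_prod)
    show "a * b \<in> scale_set c (mod_prod I J)" if "a \<in> scale_set c I" "b \<in> J" for a b
      using that unfolding scale_set_def by (auto simp: mult.assoc intro: mult_mem_mod_prod)
  qed
  show "scale_set c (mod_prod I J) \<subseteq> mod_prod (scale_set c I) J"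
  proof
    fix z assume "z \<in> scale_set c (mod_prod I J)"
    then obtain w where w: "w \<in> mod_prod I J" "z = c * w" unfolding scale_set_def by blast
    from w(1) have "c * w \<in> mod_prod (scale_set c I) J"
    proof (induction rule: mod_prod_induct)
      case (step a b x)
      have "c * (a * b + x) = (c * a) * b + c * x" by (simp add: algebra_simps)
      moreover have "c * a \<in> scale_set c I" using step unfolding scale_set_def by blast
      ultimately show ?case using step by (auto intro!: add_mem_mod_prod mult_mem_mod_prod)
    qed (simp add: zero_mem_mod_prod)
    then show "z \<in> mod_prod (scale_set c I) J" using w by simp
  qed
qed

section \<open>Ideals of a subring\<close>

definition r_module :: "'k::field set \<Rightarrow> 'k set \<Rightarrow> bool" where
  "r_module R M \<longleftrightarrow> 0 \<in> M \<and> (\<forall>a\<in>M. \<forall>b\<in>M. a + b \<in> M) \<and> (\<forall>r\<in>R. \<forall>x\<in>M. r * x \<in> M)"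

lemma r_module_mod_prod_left:
  assumes "r_module R I"
  shows "r_module R (mod_prod I J)"
  unfolding r_module_def
proof (intro conjI ballI)
  fix r z assume r: "r \<in> R" and z: "z \<in> mod_prod I J"
  from z show "r * z \<in> mod_prod I J"
  proof (induction rule: mod_prod_induct)
    case (step a b x)
    have "r * (a * b + x) = (r * a) * b + r * x" by (simp add: algebra_simps)
    moreover have "r * a \<in> I" using assms r step unfolding r_module_def by blast
    ultimately show ?case using step by (auto intro!: add_mem_mod_prod mult_mem_mod_prod)
  qed (simp add: zero_mem_mod_prod)
qed (auto intro: zero_mem_mod_prod add_mem_mod_prod)

lemma r_module_mod_prod_right: "r_module R J \<Longrightarrow> r_module R (mod_prod I J)"
  using r_module_mod_prod_left mod_prod_commute by metis

lemma ideal_imp_r_module: "is_ideal R M \<Longrightarrow> r_module R M"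
  unfolding is_ideal_def r_module_def by blast

lemma frac_ideal_imp_r_module: "frac_ideal R I \<Longrightarrow> r_module R I"
  unfolding frac_ideal_def r_module_def by blast

locale subring =
  fixes R :: "'k::field set"
  assumes subring: "subring_of R"
begin

lemma zero_mem: "0 \<in> R" and one_mem: "1 \<in> R"
  and add_mem: "a \<in> R \<Longrightarrow> b \<in> R \<Longrightarrow> a + b \<in> R"
  and diff_mem: "a \<in> R \<Longrightarrow> b \<in> R \<Longrightarrow> a - b \<in> R"
  and mult_mem: "a \<in> R \<Longrightarrow> b \<in> R \<Longrightarrow> a * b \<in> R"
  using subring by (simp_all add: subring_of_def)

lemma uminus_mem: "a \<in> R \<Longrightarrow> - a \<in> R"
  using diff_mem[OF zero_mem] by fastforce

lemma sum_mem: "(\<And>i. i \<in> S \<Longrightarrow> f i \<in> R) \<Longrightarrow> sum f S \<in> R"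
  by (induction S rule: infinite_finite_induct) (simp_all add: zero_mem add_mem)

lemma r_module_self: "r_module R R"
  by (simp add: r_module_def zero_mem add_mem mult_mem)

lemma is_ideal_self: "is_ideal R R"
  by (simp add: is_ideal_def zero_mem add_mem diff_mem mult_mem)

lemma r_module_frac_inv: "r_module R (frac_inv R J)"
  unfolding r_module_def frac_inv_def
  by (auto simp: distrib_right mult.assoc zero_mem add_mem mult_mem)

lemma mod_prod_self_right:
  assumes "r_module R M"
  shows "mod_prod M R = M"
proof
  show "mod_prod M R \<subseteq> M"
  proof (rule mod_prod_least)
    show "a * b \<in> M" if "a \<in> M" "b \<in> R" for a b
      using that assms unfolding r_module_def by (metis mult.commute)
  qed (use assms in \<open>auto simp: r_module_def\<close>)
  show "M \<subseteq> mod_prod M R"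
    using mult_mem_mod_prod[OF _ one_mem] by fastforce
qed

lemma mod_prod_self_left: "r_module R M \<Longrightarrow> mod_prod R M = M"
  using mod_prod_self_right mod_prod_commute by metis

lemma mod_prod_frac_inv_subset: "mod_prod J (frac_inv R J) \<subseteq> R"
  by (rule mod_prod_least) (auto simp: frac_inv_def mult.commute zero_mem add_mem)

lemma frac_inv_unique:
  assumes N: "r_module R N" and MN: "mod_prod M N = R"
  shows "frac_inv R M = N"
proof
  show "N \<subseteq> frac_inv R M"
    using MN mult_mem_mod_prod[of _ M _ N] by (fastforce simp: frac_inv_def mult.commute)
  show "frac_inv R M \<subseteq> N"
  proof
    fix x assume x: "x \<in> frac_inv R M"
    have "x * z \<in> N" if "z \<in> mod_prod M N" for z
      using that
    proof (induction rule: mod_prod_induct)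
      case (step a b y)
      have "x * (a * b + y) = (x * a) * b + x * y" by (simp add: algebra_simps)
      moreover have "x * a \<in> R" using x step unfolding frac_inv_def by blast
      ultimately show ?case using step N unfolding r_module_def by auto
    qed (use N in \<open>simp add: r_module_def\<close>)
    from this[of 1] show "x \<in> N" using MN one_mem by simp
  qed
qed

lemma r_module_subset_imp_ideal:
  assumes M: "r_module R M" and "M \<subseteq> R"
  shows "is_ideal R M"
proof -
  have "a - b \<in> M" if "a \<in> M" "b \<in> M" for a b
  proof -
    have "-1 \<in> R" using uminus_mem[OF one_mem] .
    then have "a + (-1) * b \<in> M" using M that unfolding r_module_def by blast
    then show ?thesis by simp
  qed
  then show ?thesis using M \<open>M \<subseteq> R\<close> unfolding is_ideal_def r_module_def by auto
qed

lemma is_ideal_mod_prod: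
  assumes "is_ideal R I" "is_ideal R J"
  shows "is_ideal R (mod_prod I J)"
proof (rule r_module_subset_imp_ideal)
  show "r_module R (mod_prod I J)"
    using assms(1) by (intro r_module_mod_prod_left ideal_imp_r_module)
  show "mod_prod I J \<subseteq> R"
  proof (rule mod_prod_least)
    show "a * b \<in> R" if "a \<in> I" "b \<in> J" for a b
      using that assms mult_mem unfolding is_ideal_def by blast
  qed (auto simp: zero_mem add_mem)
qed

lemma is_ideal_scale_set:
  assumes "a \<in> R"
  shows "is_ideal R (scale_set a R)"
proof (rule r_module_subset_imp_ideal)
  have "a * x + a * y \<in> scale_set a R" "r * (a * x) \<in> scale_set a R"
    if "x \<in> R" "y \<in> R" "r \<in> R" for x y r
  proof -
    have "a * x + a * y = a * (x + y)" "r * (a * x) = a * (r * x)" by (simp_all add: algebra_simps)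
    then show "a * x + a * y \<in> scale_set a R" "r * (a * x) \<in> scale_set a R"
      using that add_mem mult_mem unfolding scale_set_def by auto
  qed
  moreover have "0 \<in> scale_set a R"
    using zero_mem unfolding scale_set_def by (metis image_eqI mult_zero_right)
  ultimately show "r_module R (scale_set a R)"
    unfolding r_module_def by (auto simp: scale_set_def)
  show "scale_set a R \<subseteq> R" using assms mult_mem by (auto simp: scale_set_def)
qed

lemma one_mem_frac_inv: "is_ideal R A \<Longrightarrow> 1 \<in> frac_inv R A"
  by (auto simp: frac_inv_def is_ideal_def)

lemma subset_mod_prod_frac_inv: "is_ideal R P \<Longrightarrow> A \<subseteq> mod_prod A (frac_inv R P)"
  using mult_mem_mod_prod[OF _ one_mem_frac_inv] by fastforce

lemma frac_inv_self: "frac_inv R R = R"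
  using frac_inv_unique[OF r_module_self mod_prod_self_right[OF r_module_self]] .

lemma frac_inv_mod_prod_subset: "mod_prod X (frac_inv R (mod_prod A X)) \<subseteq> frac_inv R A"
proof (rule mod_prod_least)
  show "u * v \<in> frac_inv R A" if u: "u \<in> X" and v: "v \<in> frac_inv R (mod_prod A X)" for u v
  proof -
    have "v * (c * u) \<in> R" if "c \<in> A" for c
      using v mult_mem_mod_prod[OF that u] unfolding frac_inv_def by blast
    then show ?thesis unfolding frac_inv_def by (simp add: algebra_simps)
  qed
qed (use r_module_frac_inv in \<open>auto simp: r_module_def\<close>)

lemma r_module_foldr_mod_prod: "r_module R (foldr mod_prod ps R)"
  by (induction ps) (simp_all add: r_module_self r_module_mod_prod_right)

lemma is_ideal_foldr_mod_prod: "\<forall>P\<in>set ps. is_ideal R P \<Longrightarrow> is_ideal R (foldr mod_prod ps R)"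
  by (induction ps) (simp_all add: is_ideal_self is_ideal_mod_prod)

lemma foldr_mod_prod_eq: "r_module R X \<Longrightarrow> foldr mod_prod ps X = mod_prod (foldr mod_prod ps R) X"
  by (induction ps) (simp_all add: mod_prod_self_left mod_prod_assoc)

lemma foldr_mod_prod_append:
  "foldr mod_prod (ps @ qs) R = mod_prod (foldr mod_prod ps R) (foldr mod_prod qs R)"
  using foldr_mod_prod_eq[OF r_module_foldr_mod_prod] by simp

lemma foldr_mod_prod_remove:
  "foldr mod_prod (us @ Q # vs) R = mod_prod Q (foldr mod_prod (us @ vs) R)"
proof -
  have "foldr mod_prod (us @ Q # vs) R = mod_prod (foldr mod_prod us R) (mod_prod Q (foldr mod_prod vs R))"
    using foldr_mod_prod_eq[OF r_module_mod_prod_right[OF r_module_foldr_mod_prod]] by simp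
  also have "\<dots> = mod_prod Q (foldr mod_prod (us @ vs) R)"
    using foldr_mod_prod_eq[OF r_module_foldr_mod_prod] by (simp add: mod_prod_left_commute)
  finally show ?thesis .
qed

lemma prime_ideal_contains_factor:
  assumes P: "is_prime_ideal R P" and ps: "\<forall>Q\<in>set ps. is_ideal R Q"
    and "foldr mod_prod ps R \<subseteq> P"
  shows "\<exists>Q\<in>set ps. Q \<subseteq> P"
  using ps \<open>foldr mod_prod ps R \<subseteq> P\<close>
proof (induction ps)
  case Nil
  then show ?case using P unfolding is_prime_ideal_def is_ideal_def by auto
next
  case (Cons Q ps)
  show ?case
  proof (cases "Q \<subseteq> P")
    case False
    then obtain q where q: "q \<in> Q" "q \<notin> P" by blast
    have "z \<in> P" if z: "z \<in> foldr mod_prod ps R" for z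
    proof -
      have "q * z \<in> P" using Cons.prems mult_mem_mod_prod[OF q(1) z] by auto
      moreover have "q \<in> R" "z \<in> R"
        using q z Cons.prems is_ideal_foldr_mod_prod[of ps] by (auto simp: is_ideal_def)
      ultimately show ?thesis using P q(2) unfolding is_prime_ideal_def by blast
    qed
    then show ?thesis using Cons by auto
  qed simp
qed

definition ideal_adjoin :: "'k set \<Rightarrow> 'k \<Rightarrow> 'k set" where
  "ideal_adjoin A b = {u + r * b | u r. u \<in> A \<and> r \<in> R}"

lemma subset_ideal_adjoin: "A \<subseteq> ideal_adjoin A b"
proof
  fix u assume "u \<in> A"
  then have "u + 0 * b \<in> ideal_adjoin A b" using zero_mem unfolding ideal_adjoin_def by blast
  then show "u \<in> ideal_adjoin A b" by simp
qed

lemma mem_ideal_adjoin: "0 \<in> A \<Longrightarrow> b \<in> ideal_adjoin A b"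
  using one_mem unfolding ideal_adjoin_def by (metis (mono_tags, lifting) CollectI add_0 mult_1)

lemma is_ideal_ideal_adjoin:
  assumes A: "is_ideal R A" and b: "b \<in> R"
  shows "is_ideal R (ideal_adjoin A b)"
proof (rule r_module_subset_imp_ideal)
  show "r_module R (ideal_adjoin A b)"
    unfolding r_module_def
  proof (intro conjI ballI)
    show "0 \<in> ideal_adjoin A b" using A subset_ideal_adjoin by (auto simp: is_ideal_def)
  next
    fix x y assume "x \<in> ideal_adjoin A b" "y \<in> ideal_adjoin A b"
    then obtain u r u' r' where h: "u \<in> A" "r \<in> R" "x = u + r * b"
      "u' \<in> A" "r' \<in> R" "y = u' + r' * b"
      unfolding ideal_adjoin_def by blast
    have "x + y = (u + u') + (r + r') * b" using h by (simp add: algebra_simps)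
    then show "x + y \<in> ideal_adjoin A b"
      using h A add_mem unfolding ideal_adjoin_def is_ideal_def by blast
  next
    fix s x assume s: "s \<in> R" and "x \<in> ideal_adjoin A b"
    then obtain u r where h: "u \<in> A" "r \<in> R" "x = u + r * b"
      unfolding ideal_adjoin_def by blast
    have "s * x = s * u + (s * r) * b" using h by (simp add: algebra_simps)
    then show "s * x \<in> ideal_adjoin A b"
      using h s A mult_mem unfolding ideal_adjoin_def is_ideal_def by blast
  qed
  show "ideal_adjoin A b \<subseteq> R"
  proof
    fix x assume "x \<in> ideal_adjoin A b"
    then obtain u r where h: "u \<in> A" "r \<in> R" "x = u + r * b"
      unfolding ideal_adjoin_def by blast
    then show "x \<in> R" using A b add_mem mult_mem unfolding is_ideal_def by blast
  qed
qed

lemma ideal_adjoin_mod_prod_subset: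
  assumes A: "is_ideal R A" and b: "b1 \<in> R" "b2 \<in> R" "b1 * b2 \<in> A"
  shows "mod_prod (ideal_adjoin A b1) (ideal_adjoin A b2) \<subseteq> A"
proof (rule mod_prod_least)
  fix x y assume "x \<in> ideal_adjoin A b1" "y \<in> ideal_adjoin A b2"
  then obtain u r u' s where h: "u \<in> A" "r \<in> R" "x = u + r * b1" "u' \<in> A" "s \<in> R" "y = u' + s * b2"
    unfolding ideal_adjoin_def by blast
  have "x * y = u * u' + (s * b2) * u + (r * b1) * u' + (r * s) * (b1 * b2)"
    using h by (simp add: algebra_simps)
  moreover have "u \<in> R" using h A by (auto simp: is_ideal_def)
  ultimately show "x * y \<in> A" using A h b by (simp add: is_ideal_def mult_mem)
qed (use A in \<open>auto simp: is_ideal_def\<close>)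

lemma exists_zero_divisor_if_not_prime:
  assumes "is_ideal R A" "A \<noteq> R" "\<not> is_prime_ideal R A"
  obtains b1 b2 where "b1 \<in> R" "b2 \<in> R" "b1 * b2 \<in> A" "b1 \<notin> A" "b2 \<notin> A"
  using assms unfolding is_prime_ideal_def by blast

lemma maximal_imp_prime:
  assumes M: "is_maximal_ideal R M"
  shows "is_prime_ideal R M"
proof -
  have Mid: "is_ideal R M" and "M \<noteq> R" using M by (auto simp: is_maximal_ideal_def)
  have "b \<in> M" if ab: "a \<in> R" "b \<in> R" "a * b \<in> M" and "a \<notin> M" for a b
  proof -
    have "a \<in> ideal_adjoin M a" using Mid mem_ideal_adjoin by (simp add: is_ideal_def)
    then have "ideal_adjoin M a = R"
      using M is_ideal_ideal_adjoin[OF Mid ab(1)] subset_ideal_adjoin \<open>a \<notin> M\<close>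
      unfolding is_maximal_ideal_def by blast
    then obtain u r where h: "u \<in> M" "r \<in> R" "1 = u + r * a"
      using one_mem unfolding ideal_adjoin_def by blast
    have "b = b * u + r * (a * b)" using h by (metis mult.assoc mult.commute distrib_left mult_1_right)
    then show "b \<in> M" using h ab Mid unfolding is_ideal_def by metis
  qed
  then have "\<forall>a\<in>R. \<forall>b\<in>R. a * b \<in> M \<longrightarrow> a \<in> M \<or> b \<in> M" by blast
  with Mid \<open>M \<noteq> R\<close> show ?thesis unfolding is_prime_ideal_def by blast
qed

lemma is_ideal_poly_multiples:
  assumes "\<forall>n. a * x ^ n \<in> R"
  shows "is_ideal R {a * poly p x | p. (\<forall>i. coeff p i \<in> R) \<and> degree p \<le> n}"
    (is "is_ideal R (?J n)")
proof (rule r_module_subset_imp_ideal)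
  have "a * poly p x \<in> R" if "\<forall>i. coeff p i \<in> R" for p
  proof -
    have "a * poly p x = (\<Sum>i\<le>degree p. coeff p i * (a * x ^ i))"
      by (simp add: poly_altdef sum_distrib_left algebra_simps)
    also have "\<dots> \<in> R"
      using that assms by (intro sum_mem) (simp add: mult_mem)
    finally show ?thesis .
  qed
  then show "?J n \<subseteq> R" by blast
  show "r_module R (?J n)"
    unfolding r_module_def
  proof (intro conjI ballI)
    have "0 = a * poly 0 x" by simp
    then show "0 \<in> ?J n" using zero_mem by fastforce
  next
    fix u v assume "u \<in> ?J n" "v \<in> ?J n"
    then obtain p q where p: "\<forall>i. coeff p i \<in> R" "degree p \<le> n" "u = a * poly p x"
      and q: "\<forall>i. coeff q i \<in> R" "degree q \<le> n" "v = a * poly q x" by blast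
    have "u + v = a * poly (p + q) x" using p q by (simp add: algebra_simps)
    moreover have "\<forall>i. coeff (p + q) i \<in> R" using p q add_mem by simp
    moreover have "degree (p + q) \<le> n" using p q degree_add_le by blast
    ultimately show "u + v \<in> ?J n" by blast
  next
    fix r u assume r: "r \<in> R" and "u \<in> ?J n"
    then obtain p where p: "\<forall>i. coeff p i \<in> R" "degree p \<le> n" "u = a * poly p x" by blast
    have "r * u = a * poly (smult r p) x" using p by (simp add: algebra_simps)
    moreover have "\<forall>i. coeff (smult r p) i \<in> R" using p r mult_mem by simp
    moreover have "degree (smult r p) \<le> n" using p by (simp add: degree_smult_le)
    ultimately show "r * u \<in> ?J n" by blast
  qed
qed

end

section \<open>Invertibility of ideals in a Dedekind domain\<close>

locale dedekind =
  fixes R :: "'k::field set"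
  assumes dedekind: "dedekind_domain R"

sublocale dedekind \<subseteq> subring
  using dedekind by unfold_locales (simp add: dedekind_domain_def)

context dedekind
begin

lemma ascending_chain_stabilizes:
  assumes "\<And>n. is_ideal R (f n)" "\<And>n. f n \<subseteq> f (Suc n)"
  shows "\<exists>N. f (Suc N) = f N"
proof -
  have "noetherian R" using dedekind by (simp add: dedekind_domain_def)
  then obtain N where "\<forall>n\<ge>N. f n = f N" using assms unfolding noetherian_def by meson
  then show ?thesis by (metis le_SucI order_refl)
qed

lemma noetherian_induct [consumes 1, case_names step]:
  assumes "is_ideal R A"
    and step: "\<And>A. is_ideal R A \<Longrightarrow> (\<And>B. is_ideal R B \<Longrightarrow> A \<subset> B \<Longrightarrow> P B) \<Longrightarrow> P A"
  shows "P A"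
proof (rule ccontr)
  assume "\<not> P A"
  have "\<exists>f. \<forall>n. (is_ideal R (f n) \<and> \<not> P (f n)) \<and> f n \<subset> f (Suc n)"
  proof (rule dependent_nat_choice)
    show "\<exists>B. is_ideal R B \<and> \<not> P B" using assms(1) \<open>\<not> P A\<close> by blast
    show "\<exists>C. (is_ideal R C \<and> \<not> P C) \<and> B \<subset> C"
      if "is_ideal R B \<and> \<not> P B" for B :: "'k set" and n :: nat
      using step that by blast
  qed
  then obtain f where f: "\<And>n. is_ideal R (f n)" "\<And>n. f n \<subset> f (Suc n)" by blast
  then obtain N where "f (Suc N) = f N" using ascending_chain_stabilizes by (meson less_imp_le)
  then show False using f(2)[of N] by simp
qed

lemma exists_maximal_ideal:
  assumes "is_ideal R A" "A \<noteq> R"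
  shows "\<exists>P. is_maximal_ideal R P \<and> A \<subseteq> P"
  using assms
proof (induction rule: noetherian_induct)
  case (step A)
  show ?case
  proof (cases "is_maximal_ideal R A")
    case False
    then obtain J where "is_ideal R J" "A \<subset> J" "J \<noteq> R"
      using step.prems step.hyps unfolding is_maximal_ideal_def by blast
    then show ?thesis using step.IH by (meson order.strict_implies_order order_trans)
  qed blast
qed

lemma prime_imp_maximal: "is_prime_ideal R P \<Longrightarrow> P \<noteq> {0} \<Longrightarrow> is_maximal_ideal R P"
  using dedekind by (simp add: dedekind_domain_def)

lemma mem_if_power_eq_poly:
  assumes "\<forall>i. coeff p i \<in> R" "degree p \<le> N" "poly p x = x ^ Suc N"
  shows "x \<in> R"
proof -
  define q where "q = monom 1 (Suc N) - p"
  have "coeff q (Suc N) = 1" using assms(2) by (simp add: q_def coeff_eq_0)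
  moreover have "degree q \<le> Suc N"
    unfolding q_def using assms(2) by (intro degree_diff_le) (auto simp: degree_monom_le)
  moreover have "Suc N \<le> degree q" using \<open>coeff q (Suc N) = 1\<close> by (intro le_degree) simp
  ultimately have "lead_coeff q = 1" by (simp add: le_antisym)
  moreover have "\<forall>i. coeff q i \<in> R"
    using assms(1) zero_mem one_mem by (auto simp: q_def coeff_monom intro: diff_mem uminus_mem)
  moreover have "poly q x = 0" using assms(3) by (simp add: q_def poly_monom)
  ultimately show ?thesis
    using dedekind unfolding dedekind_domain_def integrally_closed_def by blast
qed

text \<open>The ideals \<open>a R[x]\<^sub>\<le>\<^sub>n\<close> form an ascending chain; once it stabilises, \<open>x\<^sup>N\<^sup>+\<^sup>1\<close> is an
  \<open>R\<close>-combination of lower powers of \<open>x\<close>.\<close>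
lemma mem_if_power_multiples_mem:
  assumes "a \<noteq> 0" "\<forall>n. a * x ^ n \<in> R"
  shows "x \<in> R"
proof -
  define J where "J n = {a * poly p x | p. (\<forall>i. coeff p i \<in> R) \<and> degree p \<le> n}" for n
  have "is_ideal R (J n)" for n
    unfolding J_def by (rule is_ideal_poly_multiples[OF assms(2)])
  moreover have "J n \<subseteq> J (Suc n)" for n
    unfolding J_def using le_SucI by auto
  ultimately obtain N where JN: "J (Suc N) = J N"
    using ascending_chain_stabilizes[of J] by blast
  have "\<forall>i. coeff (monom 1 (Suc N)) i \<in> R" using zero_mem one_mem by (simp add: coeff_monom)
  then have "a * poly (monom 1 (Suc N)) x \<in> J (Suc N)"
    unfolding J_def using degree_monom_le by blast
  then have "a * x ^ Suc N \<in> J N" by (simp add: JN poly_monom)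
  then obtain p where p: "\<forall>i. coeff p i \<in> R" "degree p \<le> N" "a * x ^ Suc N = a * poly p x"
    unfolding J_def by auto
  from p(3) have "poly p x = x ^ Suc N" using assms(1) by simp
  with p(1,2) show ?thesis by (rule mem_if_power_eq_poly)
qed

lemma mem_if_stabilizes_ideal:
  assumes A: "is_ideal R A" "A \<noteq> {0}" and stable: "\<forall>c\<in>A. x * c \<in> A"
  shows "x \<in> R"
proof -
  obtain c where c: "c \<in> A" "c \<noteq> 0" using A by (auto simp: is_ideal_def)
  have "x ^ n * c \<in> A" for n
    by (induction n) (use c stable in \<open>auto simp: mult.assoc\<close>)
  then have "\<forall>n. c * x ^ n \<in> R" using A(1) by (auto simp: is_ideal_def mult.commute)
  then show ?thesis using c(2) by (rule mem_if_power_multiples_mem[rotated])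
qed

lemma contains_prime_product:
  assumes "is_ideal R A" "A \<noteq> {0}"
  shows "\<exists>ps. (\<forall>P\<in>set ps. is_prime_ideal R P \<and> P \<noteq> {0}) \<and> foldr mod_prod ps R \<subseteq> A"
  using assms
proof (induction rule: noetherian_induct)
  case (step A)
  consider "A = R" | "is_prime_ideal R A"
    | b1 b2 where "b1 \<in> R" "b2 \<in> R" "b1 * b2 \<in> A" "b1 \<notin> A" "b2 \<notin> A"
    using exists_zero_divisor_if_not_prime[OF step.hyps] by metis
  then show ?case
  proof cases
    case 1
    then show ?thesis by (intro exI[of _ "[]"]) simp
  next
    case 2
    then show ?thesis
      using step.prems mod_prod_self_right[OF ideal_imp_r_module[OF step.hyps]]
      by (intro exI[of _ "[A]"]) simp
  next
    case 3
    have "\<exists>ps. (\<forall>P\<in>set ps. is_prime_ideal R P \<and> P \<noteq> {0}) \<and>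
        foldr mod_prod ps R \<subseteq> ideal_adjoin A b" if "b \<in> R" "b \<notin> A" for b
    proof (rule step.IH)
      show "is_ideal R (ideal_adjoin A b)" using step.hyps \<open>b \<in> R\<close> by (rule is_ideal_ideal_adjoin)
      have "b \<in> ideal_adjoin A b" using step.hyps mem_ideal_adjoin by (simp add: is_ideal_def)
      then show "A \<subset> ideal_adjoin A b" using subset_ideal_adjoin \<open>b \<notin> A\<close> by blast
      show "ideal_adjoin A b \<noteq> {0}" using subset_ideal_adjoin step.prems step.hyps
        unfolding is_ideal_def by blast
    qed
    note factor_adjoin = this
    obtain ps1 where ps1: "\<forall>P\<in>set ps1. is_prime_ideal R P \<and> P \<noteq> {0}"
      "foldr mod_prod ps1 R \<subseteq> ideal_adjoin A b1"
      using factor_adjoin[OF 3(1,4)] by blast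
    obtain ps2 where ps2: "\<forall>P\<in>set ps2. is_prime_ideal R P \<and> P \<noteq> {0}"
      "foldr mod_prod ps2 R \<subseteq> ideal_adjoin A b2"
      using factor_adjoin[OF 3(2,5)] by blast
    have "foldr mod_prod (ps1 @ ps2) R = mod_prod (foldr mod_prod ps1 R) (foldr mod_prod ps2 R)"
      by (rule foldr_mod_prod_append)
    also have "\<dots> \<subseteq> mod_prod (ideal_adjoin A b1) (ideal_adjoin A b2)"
      using ps1 ps2 by (intro mod_prod_mono)
    also have "\<dots> \<subseteq> A" using ideal_adjoin_mod_prod_subset step.hyps 3 by blast
    finally show ?thesis using ps1 ps2 by (intro exI[of _ "ps1 @ ps2"]) auto
  qed
qed

text \<open>Take a shortest product of nonzero primes inside \<open>A\<close>; one factor is \<open>P\<close>, and the product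
  of the others is not contained in \<open>A\<close>.\<close>
lemma exists_nonmember_prime_mult_subset:
  assumes A: "is_ideal R A" "A \<noteq> {0}" "A \<subseteq> P" and P: "is_prime_ideal R P"
  shows "\<exists>b. b \<notin> A \<and> (\<forall>p\<in>P. p * b \<in> A)"
proof -
  define good where "good ps \<longleftrightarrow>
    (\<forall>Q\<in>set ps. is_prime_ideal R Q \<and> Q \<noteq> {0}) \<and> foldr mod_prod ps R \<subseteq> A" for ps
  obtain ps0 where "good ps0" using contains_prime_product[OF A(1,2)] good_def by blast
  then obtain ps where ps: "good ps" and shortest: "\<And>qs. good qs \<Longrightarrow> length ps \<le> length qs"
    using ex_has_least_nat[of good ps0 length] by blast
  have "\<forall>Q\<in>set ps. is_ideal R Q" using ps by (simp add: good_def is_prime_ideal_def)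
  moreover have "foldr mod_prod ps R \<subseteq> P" using ps A(3) unfolding good_def by blast
  ultimately obtain Q where Q: "Q \<in> set ps" "Q \<subseteq> P"
    using prime_ideal_contains_factor[OF P] by blast
  have "is_maximal_ideal R Q" using ps Q(1) prime_imp_maximal unfolding good_def by blast
  moreover have "is_ideal R P" "P \<noteq> R" using P by (simp_all add: is_prime_ideal_def)
  ultimately have "Q = P" using Q(2) unfolding is_maximal_ideal_def by blast
  obtain us vs where ps_eq: "ps = us @ Q # vs" using split_list[OF Q(1)] by blast
  have "\<not> good (us @ vs)"
  proof
    assume "good (us @ vs)"
    then have "length ps \<le> length (us @ vs)" by (rule shortest)
    then show False using ps_eq by simp
  qed
  moreover have "\<forall>Q\<in>set (us @ vs). is_prime_ideal R Q \<and> Q \<noteq> {0}"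
    using ps ps_eq unfolding good_def by simp
  ultimately obtain b where b: "b \<in> foldr mod_prod (us @ vs) R" "b \<notin> A"
    unfolding good_def by blast
  have "p * b \<in> A" if "p \<in> P" for p
  proof -
    have "p * b \<in> mod_prod Q (foldr mod_prod (us @ vs) R)"
      using mult_mem_mod_prod[OF _ b(1)] \<open>Q = P\<close> that by blast
    then have "p * b \<in> foldr mod_prod ps R" by (simp only: ps_eq foldr_mod_prod_remove)
    then show ?thesis using ps unfolding good_def by blast
  qed
  with b(2) show ?thesis by blast
qed

lemma frac_inv_prime_not_subset:
  assumes P: "is_prime_ideal R P" "P \<noteq> {0}"
  shows "\<not> frac_inv R P \<subseteq> R"
proof -
  have Pid: "is_ideal R P" using P(1) by (simp add: is_prime_ideal_def)
  obtain a where a: "a \<in> P" "a \<noteq> 0" using Pid P(2) by (auto simp: is_ideal_def)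
  have "a \<in> R" using Pid a(1) by (auto simp: is_ideal_def)
  define Ra where "Ra = scale_set a R"
  have Ra_ideal: "is_ideal R Ra" unfolding Ra_def using \<open>a \<in> R\<close> by (rule is_ideal_scale_set)
  have "a * 1 \<in> Ra" unfolding Ra_def scale_set_def using one_mem by blast
  then have Ra_nonzero: "Ra \<noteq> {0}" using a(2) by auto
  have Ra_P: "Ra \<subseteq> P"
    using Pid a(1) unfolding Ra_def scale_set_def is_ideal_def by (auto simp: mult.commute)
  obtain b where b: "b \<notin> Ra" "\<forall>p\<in>P. p * b \<in> Ra"
    using exists_nonmember_prime_mult_subset[OF Ra_ideal Ra_nonzero Ra_P P(1)] by blast
  have "b / a * p \<in> R" if "p \<in> P" for p
  proof -
    have "p * b \<in> Ra" using b(2) that by blast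
    then obtain r where "r \<in> R" "p * b = a * r" unfolding Ra_def scale_set_def by blast
    then show ?thesis using a(2) by (simp add: field_simps)
  qed
  then have "b / a \<in> frac_inv R P" unfolding frac_inv_def by blast
  moreover have "b / a \<notin> R"
  proof
    assume "b / a \<in> R"
    then have "a * (b / a) \<in> Ra" unfolding Ra_def scale_set_def by blast
    then show False using b(1) a(2) by simp
  qed
  ultimately show ?thesis by blast
qed

lemma mod_prod_frac_inv_prime_neq:
  assumes A: "is_ideal R A" "A \<noteq> {0}" and P: "is_prime_ideal R P" "P \<noteq> {0}"
  shows "mod_prod A (frac_inv R P) \<noteq> A"
proof
  assume eq: "mod_prod A (frac_inv R P) = A"
  obtain x where x: "x \<in> frac_inv R P" "x \<notin> R" using frac_inv_prime_not_subset[OF P] by blast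
  have "\<forall>c\<in>A. x * c \<in> A"
    using mult_mem_mod_prod[OF _ x(1), of _ A] eq by (simp add: mult.commute)
  then have "x \<in> R" using A by (intro mem_if_stabilizes_ideal)
  with x(2) show False ..
qed

theorem ideal_invertible:
  assumes "is_ideal R A" "A \<noteq> {0}"
  shows "mod_prod A (frac_inv R A) = R"
  using assms
proof (induction rule: noetherian_induct)
  case (step A)
  show ?case
  proof (cases "A = R")
    case True
    then show ?thesis by (simp add: frac_inv_self mod_prod_self_right r_module_self)
  next
    case False
    obtain P where P: "is_maximal_ideal R P" "A \<subseteq> P"
      using exists_maximal_ideal[OF step.hyps False] by blast
    have P_prime: "is_prime_ideal R P" using maximal_imp_prime[OF P(1)] .
    have P_nonzero: "P \<noteq> {0}" using P(2) step.prems step.hyps unfolding is_ideal_def by blast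
    have P_ideal: "is_ideal R P" using P(1) by (simp add: is_maximal_ideal_def)
    define B where "B = mod_prod A (frac_inv R P)"
    have "B \<subseteq> mod_prod P (frac_inv R P)" unfolding B_def using P(2) by (rule mod_prod_mono) simp
    then have B_ideal: "is_ideal R B"
      using mod_prod_frac_inv_subset unfolding B_def
      by (intro r_module_subset_imp_ideal r_module_mod_prod_left ideal_imp_r_module[OF step.hyps]) blast
    have "A \<subset> B"
      using subset_mod_prod_frac_inv[OF P_ideal]
        mod_prod_frac_inv_prime_neq[OF step.hyps step.prems P_prime P_nonzero]
      unfolding B_def by blast
    moreover from this have "B \<noteq> {0}" using step.prems step.hyps unfolding is_ideal_def by blast
    ultimately have "mod_prod B (frac_inv R B) = R" by (rule step.IH[OF B_ideal])
    then have "R = mod_prod A (mod_prod (frac_inv R P) (frac_inv R B))"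
      by (simp add: B_def mod_prod_assoc)
    also have "\<dots> \<subseteq> mod_prod A (frac_inv R A)"
      using frac_inv_mod_prod_subset unfolding B_def by (rule mod_prod_mono[OF order_refl])
    finally show ?thesis using mod_prod_frac_inv_subset by blast
  qed
qed

lemma ideal_pow_mod_prod_frac_inv:
  assumes "is_ideal R C" "C \<noteq> {0}"
  shows "mod_prod (ideal_pow R C i) (ideal_pow R (frac_inv R C) i) = R"
proof (induction i)
  case 0
  show ?case by (simp add: mod_prod_self_right r_module_self)
next
  case (Suc i)
  have "mod_prod (ideal_pow R C (Suc i)) (ideal_pow R (frac_inv R C) (Suc i))
    = mod_prod (mod_prod (ideal_pow R C i) (ideal_pow R (frac_inv R C) i)) (mod_prod C (frac_inv R C))"
    by (simp add: mod_prod_assoc mod_prod_left_commute)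
  then show ?case by (simp add: Suc ideal_invertible[OF assms] mod_prod_self_right r_module_self)
qed

lemma frac_inv_ideal_pow:
  assumes "is_ideal R C" "C \<noteq> {0}"
  shows "frac_inv R (ideal_pow R C i) = ideal_pow R (frac_inv R C) i"
proof (rule frac_inv_unique)
  show "r_module R (ideal_pow R (frac_inv R C) i)"
    by (induction i) (simp_all add: r_module_self r_module_mod_prod_right r_module_frac_inv)
qed (rule ideal_pow_mod_prod_frac_inv[OF assms])

section \<open>The ideal classes of the sets \<open>A\<^sub>i\<close>\<close>

lemma frac_ideal_eq_scale_set:
  assumes C: "is_ideal R C" "C \<noteq> {0}" and I: "frac_ideal R I"
    and "c \<noteq> 0" and J: "scale_set (inverse c) (mod_prod I C) = J"
  shows "I = scale_set c (mod_prod J (frac_inv R C))"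
proof -
  have "I = mod_prod I (mod_prod C (frac_inv R C))"
    by (simp add: ideal_invertible[OF C] mod_prod_self_right frac_ideal_imp_r_module[OF I])
  also have "\<dots> = mod_prod (scale_set c J) (frac_inv R C)"
    using J \<open>c \<noteq> 0\<close> by (simp add: scale_set_inverse_eq_iff flip: mod_prod_assoc)
  finally show ?thesis by (simp add: mod_prod_scale_set)
qed

lemma mod_prod_not_subset:
  assumes C: "is_ideal R C" "C \<noteq> {0}" and I: "frac_ideal R I" "R \<subseteq> I" "I \<noteq> R"
  shows "\<not> mod_prod I C \<subseteq> C"
proof
  assume "mod_prod I C \<subseteq> C"
  then have "mod_prod (mod_prod I C) (frac_inv R C) \<subseteq> R"
    using mod_prod_mono[OF _ order_refl] mod_prod_frac_inv_subset by blast
  moreover have "mod_prod (mod_prod I C) (frac_inv R C) = I"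
    using frac_ideal_eq_scale_set[OF C I(1) one_neq_zero] by simp
  ultimately show False using I(2,3) by blast
qed

lemma A_set_diff_eq_scale_set:
  assumes C: "is_ideal R C" "C \<noteq> {0}"
    and "I \<in> A_set R C (Suc j) - A_set R C j"
  shows "\<exists>a. a \<noteq> 0 \<and> I = scale_set a (ideal_pow R (frac_inv R C) (Suc j))"
  using assms(3)
proof (induction j arbitrary: I)
  case 0
  then have I: "frac_ideal R I" "R \<subseteq> I" "I \<noteq> R"
    and witness: "\<forall>x \<in> mod_prod I C - C. \<exists>y\<in>C. scale_set (inverse (x - y)) (mod_prod I C) = R"
    by (auto simp: E_set_def)
  then have "\<not> mod_prod I C \<subseteq> C" using mod_prod_not_subset[OF C] by blast
  then obtain x y where x: "x \<in> mod_prod I C" "x \<notin> C" and y: "y \<in> C"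
    and eq: "scale_set (inverse (x - y)) (mod_prod I C) = R"
    using witness by blast
  have "x - y \<noteq> 0" using x(2) y by auto
  with frac_ideal_eq_scale_set[OF C I(1) _ eq] show ?case
    by (intro exI[of _ "x - y"]) simp
next
  case (Suc j)
  then have I: "I \<in> E_set R"
    and witness: "\<forall>x \<in> mod_prod I C - C. \<exists>y\<in>C.
      scale_set (inverse (x - y)) (mod_prod I C) \<in> A_set R C (Suc j)"
    and "I \<notin> A_set R C (Suc j)"
    unfolding A_set.simps(2)[of R C "Suc j"] by blast+
  then obtain x where x: "x \<in> mod_prod I C - C"
    and fresh: "\<forall>y\<in>C. scale_set (inverse (x - y)) (mod_prod I C) \<notin> A_set R C j"
    unfolding A_set.simps(2)[of R C j] by blast
  obtain y where y: "y \<in> C"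
    and J: "scale_set (inverse (x - y)) (mod_prod I C) \<in> A_set R C (Suc j)"
    using witness x by blast
  obtain a where a: "a \<noteq> 0"
    "scale_set (inverse (x - y)) (mod_prod I C) = scale_set a (ideal_pow R (frac_inv R C) (Suc j))"
    using Suc.IH J fresh y by blast
  have "x - y \<noteq> 0" using x y by auto
  then have "I = scale_set ((x - y) * a) (ideal_pow R (frac_inv R C) (Suc (Suc j)))"
    using frac_ideal_eq_scale_set[OF C _ _ a(2)] I
    by (simp add: E_set_def mod_prod_scale_set scale_set_scale_set)
  then show ?case using \<open>x - y \<noteq> 0\<close> a(1) by (intro exI[of _ "(x - y) * a"]) simp
qed

end

lemma ideal_class_scale_set:
  assumes "a \<noteq> 0"
  shows "ideal_class R (scale_set a X) = ideal_class R X"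
proof -
  have "(\<exists>b. b \<noteq> 0 \<and> Y = scale_set b (scale_set a X)) \<longleftrightarrow> (\<exists>b. b \<noteq> 0 \<and> Y = scale_set b X)" for Y
  proof
    assume "\<exists>b. b \<noteq> 0 \<and> Y = scale_set b (scale_set a X)"
    then obtain b where "b \<noteq> 0" "Y = scale_set b (scale_set a X)" by blast
    then show "\<exists>b. b \<noteq> 0 \<and> Y = scale_set b X"
      using assms by (intro exI[of _ "b * a"]) (simp add: scale_set_scale_set)
  next
    assume "\<exists>b. b \<noteq> 0 \<and> Y = scale_set b X"
    then obtain b where "b \<noteq> 0" "Y = scale_set b X" by blast
    then have "Y = scale_set (b * inverse a) (scale_set a X)"
      using assms by (simp add: scale_set_scale_set mult.assoc)
    then show "\<exists>b. b \<noteq> 0 \<and> Y = scale_set b (scale_set a X)"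
      using assms \<open>b \<noteq> 0\<close> by (intro exI[of _ "b * inverse a"]) simp
  qed
  then show ?thesis unfolding ideal_class_def by auto
qed

theorem lemma2p3:
  fixes R C I :: "'k::field set" and i :: nat
  assumes "dedekind_domain R"
    and "is_ideal R C" and "C \<noteq> {0}"
    and "1 \<le> i"
    and "I \<in> A_set R C i - A_set R C (i - 1)"
  shows "ideal_class R I = ideal_class R (frac_inv R (ideal_pow R C i))"
proof -
  interpret dedekind R by standard (rule assms(1))
  obtain j where i: "i = Suc j" using assms(4) by (cases i) auto
  then have "I \<in> A_set R C (Suc j) - A_set R C j" using assms(5) by (simp del: A_set.simps)
  then obtain a where "a \<noteq> 0" "I = scale_set a (ideal_pow R (frac_inv R C) i)"
    using A_set_diff_eq_scale_set[OF assms(2,3)] i by blast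
  then show ?thesis
    by (simp add: ideal_class_scale_set frac_inv_ideal_pow[OF assms(2,3)])
qed

end
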